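(* In a PL+C model, suppose $\sum_{i\in\mathcal U}p_i\ge\alpha k$ for some $\alpha>1$. Then for every $i\in\mathcal U$, $$p_i\ge \Pr_{PLC}(\mathcal R_{i\le k})\cdot\left[1-\left(\alpha e^{1-\alpha}\right)^k\right].$$
   Context: PL+C model: universe $\mathcal U=\{1,\dots,n\}$, fixed ranking length $k\le n$. Each item $i$ has a utility $u_i\in\mathbb R$ and a consideration probability $p_i\in(0,1]$. A consideration set $C$ is drawn by including each item independently with probability $p_i$, conditioned on $|C|\ge k$: $\Pr_C(C)=\frac{1}{z_{k,p}}\prod_{h\in C}p_h\prod_{h\notin C}(1-p_h)$ for $|C|\ge k$ (with $z_{k,p}$ the normalizing constant), and $0$ otherwise. Given $C$, a length-$k$ ranking $r$ has probability $\Pr_{PL}(r\mid C)=\prod_{t=1}^k \frac{\exp(u_{r_t})}{\sum_{h\in C\setminus\{r_1,\dots,r_{t-1}\}}\exp(u_h)}$ if all $r_t\in C$, else $0$. $\Pr_{PLC}(r)=\sum_C\Pr_C(C)\Pr_{PL}(r\mid C)$, and for a set $R$ of rankings $\Pr_{PLC}(R)=\sum_{r\in R}\Pr_{PLC}(r)$. $\mathcal R_{i\le k}$ is the set of length-$k$ rankings containing $i$ (in any position). *)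

theory Defs
  imports Complex_Main
begin

definition univ :: "nat \<Rightarrow> nat set" where
  "univ n = {1..n}"

definition cs_weight :: "nat \<Rightarrow> (nat \<Rightarrow> real) \<Rightarrow> nat set \<Rightarrow> real" where
  "cs_weight n p C = (\<Prod>h\<in>C. p h) * (\<Prod>h\<in>univ n - C. 1 - p h)"

definition z_const :: "nat \<Rightarrow> nat \<Rightarrow> (nat \<Rightarrow> real) \<Rightarrow> real" where
  "z_const n k p = (\<Sum>C\<in>{C. C \<subseteq> univ n \<and> k \<le> card C}. cs_weight n p C)"

definition Pr_C :: "nat \<Rightarrow> nat \<Rightarrow> (nat \<Rightarrow> real) \<Rightarrow> nat set \<Rightarrow> real" where
  "Pr_C n k p C = (if C \<subseteq> univ n \<and> k \<le> card C then cs_weight n p C / z_const n k p else 0)"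

fun Pr_PL :: "(nat \<Rightarrow> real) \<Rightarrow> nat set \<Rightarrow> nat list \<Rightarrow> real" where
  "Pr_PL u C [] = 1"
| "Pr_PL u C (x # xs) =
     (if x \<in> C then exp (u x) / (\<Sum>h\<in>C. exp (u h)) * Pr_PL u (C - {x}) xs else 0)"

definition rankings :: "nat \<Rightarrow> nat \<Rightarrow> nat list set" where
  "rankings n k = {r. distinct r \<and> length r = k \<and> set r \<subseteq> univ n}"

definition Pr_PLC :: "nat \<Rightarrow> nat \<Rightarrow> (nat \<Rightarrow> real) \<Rightarrow> (nat \<Rightarrow> real) \<Rightarrow> nat list \<Rightarrow> real" where
  "Pr_PLC n k u p r = (\<Sum>C\<in>Pow (univ n). Pr_C n k p C * Pr_PL u C r)"

definition Pr_PLC_set :: "nat \<Rightarrow> nat \<Rightarrow> (nat \<Rightarrow> real) \<Rightarrow> (nat \<Rightarrow> real) \<Rightarrow> nat list set \<Rightarrow> real" where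
  "Pr_PLC_set n k u p R = (\<Sum>r\<in>R. Pr_PLC n k u p r)"

definition rankings_with :: "nat \<Rightarrow> nat \<Rightarrow> nat \<Rightarrow> nat list set" where
  "rankings_with n k i = {r \<in> rankings n k. i \<in> set r}"

end

theory Submission
  imports Defs
begin

text \<open>Given the consideration set \<open>C\<close>, the Plackett-Luce probabilities of the length-\<open>k\<close>
  rankings sum to at most one, and those of rankings containing \<open>i\<close> vanish unless \<open>i \<in> C\<close>.
  Hence \<open>z \<cdot> Pr(R\<^sub>i) \<le> Pr(i \<in> C) = p\<^sub>i\<close>, where \<open>z = 1 - Pr(|C| < k)\<close> is the normalising
  constant of conditioning the independent inclusion on \<open>|C| \<ge> k\<close>.  A Chernoff argument,
  \<open>Pr(|C| < k) \<le> E[\<alpha>^(k-|C|)] = \<alpha>^k \<Prod>(1 - p\<^sub>h + p\<^sub>h/\<alpha>) \<le> \<alpha>^k exp(-(1 - 1/\<alpha>) \<Sum>p\<^sub>h) \<le> (\<alpha> e^(1-\<alpha>))^k\<close>,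
  bounds \<open>z\<close> from below.\<close>

lemma Pr_PL_nonneg: "0 \<le> Pr_PL u C r"
  by (induction r arbitrary: C) (auto intro!: mult_nonneg_nonneg divide_nonneg_nonneg sum_nonneg)

lemma Pr_PL_eq_0_if_not_subset: "\<not> set r \<subseteq> C \<Longrightarrow> Pr_PL u C r = 0"
proof (induction r arbitrary: C)
  case (Cons x r)
  show ?case
  proof (cases "x \<in> C")
    case True
    then have "\<not> set r \<subseteq> C - {x}" using Cons.prems by auto
    then show ?thesis using Cons.IH True by simp
  qed simp
qed simp

lemma sum_Pr_PL_lists_le_1:
  assumes "finite A" "finite C"
  shows "(\<Sum>r\<in>{xs. set xs \<subseteq> A \<and> length xs = k}. Pr_PL u C r) \<le> 1"
  using assms(2)
proof (induction k arbitrary: C)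
  case 0
  have "{xs. set xs \<subseteq> A \<and> length xs = 0} = {[]}" by auto
  then show ?case by simp
next
  case (Suc k)
  let ?L = "{xs. set xs \<subseteq> A \<and> length xs = k}"
  let ?S = "\<Sum>h\<in>C. exp (u h)"
  have first_step: "(\<Sum>xs\<in>?L. Pr_PL u C (x # xs)) \<le> (if x \<in> C then exp (u x) / ?S else 0)" for x
  proof (cases "x \<in> C")
    case True
    then have "(\<Sum>xs\<in>?L. Pr_PL u C (x # xs)) = exp (u x) / ?S * (\<Sum>xs\<in>?L. Pr_PL u (C - {x}) xs)"
      by (simp add: sum_distrib_left)
    also have "\<dots> \<le> exp (u x) / ?S"
      using Suc.IH[of "C - {x}"] Suc.prems
      by (intro mult_left_le) (auto intro!: divide_nonneg_nonneg sum_nonneg)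
    finally show ?thesis using True by simp
  qed simp
  have "inj_on (\<lambda>(xs, x). x # xs) (?L \<times> A)" by (auto simp: inj_on_def)
  then have "(\<Sum>r\<in>{xs. set xs \<subseteq> A \<and> length xs = Suc k}. Pr_PL u C r)
      = (\<Sum>(xs, x)\<in>?L \<times> A. Pr_PL u C (x # xs))"
    unfolding lists_length_Suc_eq by (subst sum.reindex) (simp_all add: case_prod_unfold)
  also have "\<dots> = (\<Sum>x\<in>A. \<Sum>xs\<in>?L. Pr_PL u C (x # xs))"
    by (subst sum.cartesian_product[symmetric]) (rule sum.swap)
  also have "\<dots> \<le> (\<Sum>x\<in>A. if x \<in> C then exp (u x) / ?S else 0)"
    by (intro sum_mono first_step)
  also have "\<dots> = (\<Sum>x\<in>A \<inter> C. exp (u x) / ?S)"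
    using assms(1) by (simp add: sum.inter_restrict)
  also have "\<dots> \<le> (\<Sum>x\<in>C. exp (u x) / ?S)"
    using Suc.prems by (intro sum_mono2) (auto intro!: divide_nonneg_nonneg sum_nonneg)
  also have "\<dots> \<le> 1"
  proof (cases "C = {}")
    case False
    then have "?S > 0" using Suc.prems by (intro sum_pos) auto
    then show ?thesis by (simp add: sum_divide_distrib[symmetric])
  qed simp
  finally show ?case .
qed

lemma finite_univ [simp]: "finite (univ n)"
  by (simp add: univ_def)

lemma finite_rankings_with: "finite (rankings_with n k i)"
  unfolding rankings_with_def rankings_def
  by (rule finite_subset[OF _ finite_lists_length_eq[OF finite_univ[of n], of k]]) auto

lemma cs_weight_nonneg:
  assumes "\<forall>h\<in>univ n. 0 \<le> p h \<and> p h \<le> 1" "C \<subseteq> univ n"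
  shows "0 \<le> cs_weight n p C"
  unfolding cs_weight_def using assms by (intro mult_nonneg_nonneg prod_nonneg) auto

lemma sum_cs_weight_power_card:
  "(\<Sum>C\<in>Pow (univ n). cs_weight n p C * t ^ card C) = (\<Prod>h\<in>univ n. t * p h + (1 - p h))"
proof -
  have "(\<Prod>h\<in>C. t * p h) = t ^ card C * (\<Prod>h\<in>C. p h)" for C
    by (simp add: prod.distrib)
  then show ?thesis
    by (simp add: prod_add cs_weight_def mult_ac)
qed

lemma sum_cs_weight_Pow: "(\<Sum>C\<in>Pow (univ n). cs_weight n p C) = 1"
  using sum_cs_weight_power_card[of n p 1] by simp

lemma sum_cs_weight_containing:
  assumes "i \<in> univ n"
  shows "(\<Sum>C\<in>Pow (univ n). if i \<in> C then cs_weight n p C else 0) = p i"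
proof -
  \<comment> \<open>Expand the product with the factor \<open>1 - p i\<close> replaced by \<open>0\<close>.\<close>
  define q where "q h = (if h = i then 0 else 1 - p h)" for h
  have "(if i \<in> C then cs_weight n p C else 0) = (\<Prod>h\<in>C. p h) * (\<Prod>h\<in>univ n - C. q h)"
    if "C \<subseteq> univ n" for C
  proof (cases "i \<in> C")
    case True
    then have "(\<Prod>h\<in>univ n - C. q h) = (\<Prod>h\<in>univ n - C. 1 - p h)"
      by (intro prod.cong) (auto simp: q_def)
    then show ?thesis using True by (simp add: cs_weight_def)
  next
    case False
    then have "(\<Prod>h\<in>univ n - C. q h) = 0"
      using assms by (intro prod_zero) (auto simp: q_def)
    then show ?thesis using False by simp
  qed
  then have "(\<Sum>C\<in>Pow (univ n). if i \<in> C then cs_weight n p C else 0) = (\<Prod>h\<in>univ n. p h + q h)"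
    by (simp add: prod_add)
  also have "\<dots> = (p i + q i) * (\<Prod>h\<in>univ n - {i}. p h + q h)"
    using assms by (simp add: prod.remove)
  also have "(\<Prod>h\<in>univ n - {i}. p h + q h) = 1"
    by (intro prod.neutral) (auto simp: q_def)
  finally show ?thesis by (simp add: q_def)
qed

lemma sum_cs_weight_card_less_le:
  assumes p: "\<forall>h\<in>univ n. 0 \<le> p h \<and> p h \<le> 1"
    and \<alpha>: "1 \<le> \<alpha>"
    and mean: "\<alpha> * real k \<le> (\<Sum>h\<in>univ n. p h)"
  shows "(\<Sum>C\<in>{C. C \<subseteq> univ n \<and> card C < k}. cs_weight n p C) \<le> (\<alpha> * exp (1 - \<alpha>)) ^ k"
proof -
  let ?U = "univ n"
  have markov: "cs_weight n p C \<le> \<alpha> ^ k * (cs_weight n p C * (1 / \<alpha>) ^ card C)"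
    if "C \<subseteq> ?U" "card C < k" for C
  proof -
    have "cs_weight n p C \<le> cs_weight n p C * \<alpha> ^ (k - card C)"
      using cs_weight_nonneg[OF p that(1)] \<alpha> by (simp add: mult_le_cancel_left1)
    also have "\<alpha> ^ (k - card C) = \<alpha> ^ k * (1 / \<alpha>) ^ card C"
      using that \<alpha> by (simp add: power_diff power_one_over)
    finally show ?thesis by (simp add: mult_ac)
  qed
  have factor_le_exp: "p h / \<alpha> + (1 - p h) \<le> exp (- ((1 - 1 / \<alpha>) * p h))" for h
    using exp_ge_add_one_self[of "- ((1 - 1 / \<alpha>) * p h)"] by (simp add: field_simps)
  have "(\<Sum>C\<in>{C. C \<subseteq> ?U \<and> card C < k}. cs_weight n p C)
      \<le> \<alpha> ^ k * (\<Sum>C\<in>{C. C \<subseteq> ?U \<and> card C < k}. cs_weight n p C * (1 / \<alpha>) ^ card C)"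
    unfolding sum_distrib_left by (intro sum_mono markov) auto
  also have "\<dots> \<le> \<alpha> ^ k * (\<Sum>C\<in>Pow ?U. cs_weight n p C * (1 / \<alpha>) ^ card C)"
    using cs_weight_nonneg[OF p] \<alpha>
    by (intro mult_left_mono sum_mono2) auto
  also have "\<dots> = \<alpha> ^ k * (\<Prod>h\<in>?U. p h / \<alpha> + (1 - p h))"
    by (simp add: sum_cs_weight_power_card)
  also have "\<dots> \<le> \<alpha> ^ k * (\<Prod>h\<in>?U. exp (- ((1 - 1 / \<alpha>) * p h)))"
    using p \<alpha> by (intro mult_left_mono prod_mono conjI factor_le_exp) auto
  also have "\<dots> = \<alpha> ^ k * exp (- ((1 - 1 / \<alpha>) * (\<Sum>h\<in>?U. p h)))"
    by (simp add: exp_sum[symmetric] sum_negf sum_distrib_left)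
  also have "\<dots> \<le> \<alpha> ^ k * exp (- ((1 - 1 / \<alpha>) * (\<alpha> * real k)))"
    using \<alpha> mean by (intro mult_left_mono) (simp_all add: mult_left_mono)
  also have "\<dots> = (\<alpha> * exp (1 - \<alpha>)) ^ k"
    using \<alpha> by (simp add: exp_of_nat_mult[symmetric] power_mult_distrib field_simps)
  finally show ?thesis .
qed

lemma z_const_eq:
  "z_const n k p = 1 - (\<Sum>C\<in>{C. C \<subseteq> univ n \<and> card C < k}. cs_weight n p C)"
proof -
  have "Pow (univ n) = {C. C \<subseteq> univ n \<and> k \<le> card C} \<union> {C. C \<subseteq> univ n \<and> card C < k}"
    by auto
  then have "1 = z_const n k p + (\<Sum>C\<in>{C. C \<subseteq> univ n \<and> card C < k}. cs_weight n p C)"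
    unfolding z_const_def sum_cs_weight_Pow[of n p, symmetric]
    by (subst sum.union_disjoint[symmetric]) auto
  then show ?thesis by simp
qed

lemma z_const_nonneg: "\<forall>h\<in>univ n. 0 \<le> p h \<and> p h \<le> 1 \<Longrightarrow> 0 \<le> z_const n k p"
  unfolding z_const_def by (intro sum_nonneg) (auto intro: cs_weight_nonneg)

lemma Pr_C_nonneg: "\<forall>h\<in>univ n. 0 \<le> p h \<and> p h \<le> 1 \<Longrightarrow> 0 \<le> Pr_C n k p C"
  unfolding Pr_C_def by (auto intro!: divide_nonneg_nonneg cs_weight_nonneg z_const_nonneg)

text \<open>Stated without division so that it also covers \<open>z_const n k p = 0\<close>, where \<open>Pr_C\<close> is \<open>0\<close>.\<close>

lemma z_const_mult_Pr_C_le: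
  assumes "\<forall>h\<in>univ n. 0 \<le> p h \<and> p h \<le> 1" "C \<subseteq> univ n"
  shows "z_const n k p * Pr_C n k p C \<le> cs_weight n p C"
  using cs_weight_nonneg[OF assms] unfolding Pr_C_def by auto

lemma Pr_PLC_set_eq_sum_Pr_C:
  "finite R \<Longrightarrow> Pr_PLC_set n k u p R = (\<Sum>C\<in>Pow (univ n). Pr_C n k p C * (\<Sum>r\<in>R. Pr_PL u C r))"
  unfolding Pr_PLC_set_def Pr_PLC_def by (subst sum.swap) (simp add: sum_distrib_left)

lemma Pr_PLC_set_nonneg: "\<forall>h\<in>univ n. 0 \<le> p h \<and> p h \<le> 1 \<Longrightarrow> 0 \<le> Pr_PLC_set n k u p R"
  unfolding Pr_PLC_set_def Pr_PLC_def
  by (intro sum_nonneg mult_nonneg_nonneg Pr_C_nonneg Pr_PL_nonneg)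

lemma z_const_mult_Pr_rankings_with_le:
  assumes p: "\<forall>h\<in>univ n. 0 \<le> p h \<and> p h \<le> 1" and i: "i \<in> univ n"
  shows "z_const n k p * Pr_PLC_set n k u p (rankings_with n k i) \<le> p i"
proof -
  let ?z = "z_const n k p" and ?R = "rankings_with n k i"
  have "?z * (Pr_C n k p C * (\<Sum>r\<in>?R. Pr_PL u C r)) \<le> (if i \<in> C then cs_weight n p C else 0)"
    if C: "C \<subseteq> univ n" for C
  proof (cases "i \<in> C")
    case True
    have "(\<Sum>r\<in>?R. Pr_PL u C r) \<le> (\<Sum>r\<in>{xs. set xs \<subseteq> univ n \<and> length xs = k}. Pr_PL u C r)"
      by (rule sum_mono2[OF finite_lists_length_eq[OF finite_univ]])
         (auto simp: rankings_with_def rankings_def Pr_PL_nonneg)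
    also have "\<dots> \<le> 1"
      using C by (intro sum_Pr_PL_lists_le_1 finite_univ) (rule finite_subset, auto)
    finally have "?z * (Pr_C n k p C * (\<Sum>r\<in>?R. Pr_PL u C r)) \<le> ?z * Pr_C n k p C"
      using p unfolding mult.assoc[symmetric]
      by (intro mult_left_le mult_nonneg_nonneg z_const_nonneg Pr_C_nonneg)
    then show ?thesis
      using True z_const_mult_Pr_C_le[OF p C, of k] by simp
  next
    case False
    then have "(\<Sum>r\<in>?R. Pr_PL u C r) = 0"
      by (intro sum.neutral ballI Pr_PL_eq_0_if_not_subset) (auto simp: rankings_with_def)
    then show ?thesis using False by simp
  qed
  then have "?z * Pr_PLC_set n k u p ?R \<le> (\<Sum>C\<in>Pow (univ n). if i \<in> C then cs_weight n p C else 0)"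
    unfolding Pr_PLC_set_eq_sum_Pr_C[OF finite_rankings_with] sum_distrib_left
    by (intro sum_mono) auto
  then show ?thesis
    using sum_cs_weight_containing[OF i] by simp
qed

theorem theorem4:
  fixes n k :: nat and u p :: "nat \<Rightarrow> real" and \<alpha> :: real and i :: nat
  assumes "k \<le> n"
    and "\<forall>h\<in>univ n. 0 < p h \<and> p h \<le> 1"
    and "\<alpha> > 1"
    and "(\<Sum>h\<in>univ n. p h) \<ge> \<alpha> * real k"
    and "i \<in> univ n"
  shows "p i \<ge> Pr_PLC_set n k u p (rankings_with n k i) * (1 - (\<alpha> * exp (1 - \<alpha>)) ^ k)"
proof -
  have p: "\<forall>h\<in>univ n. 0 \<le> p h \<and> p h \<le> 1"
    using assms(2) by (auto intro: less_imp_le)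
  have "1 - (\<alpha> * exp (1 - \<alpha>)) ^ k \<le> z_const n k p"
    using sum_cs_weight_card_less_le[OF p _ assms(4)] assms(3) by (simp add: z_const_eq)
  then have "Pr_PLC_set n k u p (rankings_with n k i) * (1 - (\<alpha> * exp (1 - \<alpha>)) ^ k)
      \<le> z_const n k p * Pr_PLC_set n k u p (rankings_with n k i)"
    using Pr_PLC_set_nonneg[OF p] by (subst mult.commute) (rule mult_left_mono)
  also have "\<dots> \<le> p i"
    using z_const_mult_Pr_rankings_with_le[OF p assms(5)] .
  finally show ?thesis .
qed

end
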